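(* Consider a one-dimensional SOCO problem with norm $\|\cdot\|$, let $\theta\ge1$ and $N$ the norm with $N(1)=\theta\|1\|$. Then, with probability $1$, $\mathbb{E}[SC(RBG(N))]\le OPT_N/\theta$.
   Context: The decision space is a compact interval $F=[x_L,x_H]\subseteq\mathbb{R}^+$, $\|\cdot\|$ is a norm on $\mathbb{R}$, and cost functions $c^t:F\to\mathbb{R}^+$ are convex with uniformly bounded subgradients. Algorithm RBG($N$): define $w^0(x)=N(x)$ and $w^t(x)=\min_{y\in F}\{w^{t-1}(y)+c^t(y)+N(x-y)\}$; draw $r$ uniformly at random from $(-1,1)$ once; at each time $t$ choose $x^t\in F$ minimizing $Y^t(x)=w^{t-1}(x)+rN(x)$. Switching cost (in the original norm): $SC(RBG(N))=\sum_{t=1}^T\|x^{t+1}-x^t\|$. $OPT_N=\min_{(x^1,\dots,x^T)\in F^T}\sum_{t=1}^Tc^t(x^t)+N(x^t-x^{t-1})$ with $x^0=0$. The expectation is over $r$. *)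

theory Defs
  imports "HOL-Analysis.Analysis"
begin

definition is_norm_real :: "(real \<Rightarrow> real) \<Rightarrow> bool" where
  "is_norm_real nrm \<longleftrightarrow>
     (\<forall>x. 0 \<le> nrm x) \<and> (\<forall>x. nrm x = 0 \<longleftrightarrow> x = 0) \<and>
     (\<forall>c x. nrm (c * x) = \<bar>c\<bar> * nrm x) \<and>
     (\<forall>x y. nrm (x + y) \<le> nrm x + nrm y)"

definition soco_costs :: "real \<Rightarrow> real \<Rightarrow> nat \<Rightarrow> (nat \<Rightarrow> real \<Rightarrow> real) \<Rightarrow> bool" where
  "soco_costs xL xH T c \<longleftrightarrow>
     (\<forall>t\<in>{1..T}. convex_on {xL..xH} (c t) \<and> (\<forall>x\<in>{xL..xH}. 0 \<le> c t x)) \<and>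
     (\<exists>G. \<forall>t\<in>{1..T}. \<forall>x\<in>{xL..xH}.
         \<exists>g. \<bar>g\<bar> \<le> G \<and> (\<forall>y\<in>{xL..xH}. c t x + g * (y - x) \<le> c t y))"

fun work :: "real \<Rightarrow> real \<Rightarrow> (real \<Rightarrow> real) \<Rightarrow> (nat \<Rightarrow> real \<Rightarrow> real) \<Rightarrow> nat \<Rightarrow> real \<Rightarrow> real" where
  "work xL xH N c 0 x = N x"
| "work xL xH N c (Suc t) x =
     Inf ((\<lambda>y. work xL xH N c t y + c (Suc t) y + N (x - y)) ` {xL..xH})"

definition OPT :: "real \<Rightarrow> real \<Rightarrow> (real \<Rightarrow> real) \<Rightarrow> nat \<Rightarrow> (nat \<Rightarrow> real \<Rightarrow> real) \<Rightarrow> real" where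
  "OPT xL xH N T c =
     Inf {(\<Sum>t=1..T. c t (xs t) + N (xs t - xs (t - 1))) | xs.
            xs 0 = 0 \<and> (\<forall>t\<in>{1..T}. xs t \<in> {xL..xH})}"

definition RBG_run :: "real \<Rightarrow> real \<Rightarrow> (real \<Rightarrow> real) \<Rightarrow> nat \<Rightarrow> (nat \<Rightarrow> real \<Rightarrow> real)
     \<Rightarrow> (nat \<Rightarrow> real \<Rightarrow> real) \<Rightarrow> bool" where
  "RBG_run xL xH N T c X \<longleftrightarrow>
     (\<forall>r\<in>{-1<..<1}. \<forall>t\<in>{1..T+1}. X t r \<in> {xL..xH} \<and>
        (\<forall>x\<in>{xL..xH}. work xL xH N c (t - 1) (X t r) + r * N (X t r)
                        \<le> work xL xH N c (t - 1) x + r * N x))"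

definition SC :: "(real \<Rightarrow> real) \<Rightarrow> nat \<Rightarrow> (nat \<Rightarrow> real \<Rightarrow> real) \<Rightarrow> real \<Rightarrow> real" where
  "SC nrm T X r = (\<Sum>t=1..T. nrm (X (t + 1) r - X t r))"

end

theory Submission
  imports Defs
begin

text \<open>For fixed \<open>r\<close> the point \<open>X t r\<close> minimises \<open>w\<^sup>t\<^sup>-\<^sup>1(x) + r L x\<close> over \<open>F\<close>, so the minimum
  value \<open>Y_min t r\<close> is concave in \<open>r\<close> with supergradient \<open>L X t r\<close>. Hence
  \<open>\<integral> \<bar>L X (t+1) r - L X t r\<bar> dr\<close> equals a difference of increments of \<open>Y_min t\<close> and
  \<open>Y_min (t+1)\<close> as soon as the sign of \<open>X (t+1) - X t\<close> is known off a countable set.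
  Comparing the optimality conditions at times \<open>t\<close> and \<open>t+1\<close> with convexity of \<open>c\<^sup>t\<close> shows
  that the next point never moves away from the minimiser of \<open>c\<^sup>t\<close>; this fixes the sign on
  either side of a threshold \<open>\<rho>\<close> and bounds the \<open>t\<close>-th integral by the growth of
  \<open>Y_min\<close> at \<open>r = \<plusminus>1\<close>. Over all \<open>t\<close> this telescopes to \<open>w\<^sup>T(xH) + w\<^sup>T(xL)\<close> up to
  boundary terms, which is at most twice the cost of any feasible path. So
  \<open>L \<integral> \<Sigma>\<^sub>t \<bar>X (t+1) r - X t r\<bar> dr \<le> 2 OPT\<^sub>N\<close>, and \<open>L = \<theta> \<parallel>1\<parallel>\<close> gives the claim.\<close>

section \<open>Supergradients on an interval\<close>

lemma supergradient_antimono: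
  fixes g U :: "real \<Rightarrow> real"
  assumes sup: "\<And>r s. r \<in> S \<Longrightarrow> s \<in> S \<Longrightarrow> g s \<le> g r + (s - r) * U r"
    and "r \<in> S" "s \<in> S" "r \<le> s"
  shows "U s \<le> U r"
proof -
  have "g r \<le> g s + (r - s) * U s" "g s \<le> g r + (s - r) * U r"
    using sup assms by auto
  then have "(s - r) * U s \<le> (s - r) * U r"
    by (simp add: algebra_simps)
  then show ?thesis
    using \<open>r \<le> s\<close> by (cases "r = s") auto
qed

lemma supergradient_integrable:
  fixes g U :: "real \<Rightarrow> real"
  assumes sup: "\<And>r s. r \<in> {p..q} \<Longrightarrow> s \<in> {p..q} \<Longrightarrow> g s \<le> g r + (s - r) * U r"
  shows "U integrable_on {p..q}"
proof -
  have "mono_on {p..q} (\<lambda>x. - U x)"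
    using supergradient_antimono[of "{p..q}" g U, OF sup] by (auto simp: mono_on_def)
  then show ?thesis
    using integrable_on_mono_on integrable_neg_iff by blast
qed

lemma supergradient_integral_error:
  fixes g U :: "real \<Rightarrow> real"
  assumes sup: "\<And>r s. r \<in> {p..q} \<Longrightarrow> s \<in> {p..q} \<Longrightarrow> g s \<le> g r + (s - r) * U r"
    and ab: "p \<le> a" "a \<le> b" "b \<le> q"
  shows "\<bar>integral {a..b} U - (g b - g a)\<bar> \<le> (b - a) * (U a - U b)"
proof -
  have anti: "U s \<le> U r" if "r \<in> {p..q}" "s \<in> {p..q}" "r \<le> s" for r s
    using supergradient_antimono[of "{p..q}" g U, OF sup] that by blast
  have int: "U integrable_on {a..b}"
    using integrable_on_subinterval[OF supergradient_integrable[OF sup]] ab by auto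
  have "integral {a..b} (\<lambda>_. U b) \<le> integral {a..b} U"
    by (rule integral_le) (use anti ab int in auto)
  moreover have "integral {a..b} U \<le> integral {a..b} (\<lambda>_. U a)"
    by (rule integral_le) (use anti ab int in auto)
  ultimately have "(b - a) * U b \<le> integral {a..b} U" "integral {a..b} U \<le> (b - a) * U a"
    using ab by (simp_all add: mult.commute)
  moreover have "(b - a) * U b \<le> g b - g a" "g b - g a \<le> (b - a) * U a"
    using sup[of b a] sup[of a b] ab by (auto simp: algebra_simps)
  ultimately show ?thesis
    by (simp add: abs_le_iff algebra_simps)
qed

lemma supergradient_has_integral:
  fixes g U :: "real \<Rightarrow> real"
  assumes "p \<le> q"
    and sup: "\<And>r s. r \<in> {p..q} \<Longrightarrow> s \<in> {p..q} \<Longrightarrow> g s \<le> g r + (s - r) * U r"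
  shows "(U has_integral (g q - g p)) {p..q}"
proof -
  have int: "U integrable_on {p..q}"
    using sup by (rule supergradient_integrable)
  define E where "E a b = integral {a..b} U - (g b - g a)" for a b
  have bound: "\<bar>E p q\<bar> \<le> (q - p) * (U p - U q) / real k" if "k > 0" for k :: nat
  proof -
    define d where "d = (q - p) / real k"
    have d: "0 \<le> d" "p + real k * d = q"
      using that \<open>p \<le> q\<close> by (auto simp: d_def)
    have "\<bar>E p (p + real j * d)\<bar> \<le> d * (U p - U (p + real j * d))" if "j \<le> k" for j
      using that
    proof (induction j)
      case 0
      then show ?case
        by (simp add: E_def)
    next
      case (Suc j)
      define a b where "a = p + real j * d" and "b = p + real (Suc j) * d"
      have ab: "p \<le> a" "a \<le> b" "b \<le> q"
        using d Suc.prems mult_right_mono[of "real (Suc j)" "real k" d]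
        by (auto simp: a_def b_def algebra_simps)
      have "integral {p..a} U + integral {a..b} U = integral {p..b} U"
        using ab by (intro Henstock_Kurzweil_Integration.integral_combine integrable_on_subinterval[OF int]) auto
      then have "E p b = E p a + E a b"
        by (simp add: E_def)
      moreover have "b - a = d"
        by (simp add: a_def b_def algebra_simps)
      ultimately have "\<bar>E p b\<bar> \<le> d * (U p - U a) + d * (U a - U b)"
        using Suc supergradient_integral_error[OF sup ab] by (simp add: a_def E_def)
      then show ?case
        by (simp add: b_def algebra_simps)
    qed
    from this[of k] show ?thesis
      using d by (simp add: d_def)
  qed
  have "\<bar>E p q\<bar> \<le> 0"
  proof (rule LIMSEQ_le_const)
    show "(\<lambda>k. (q - p) * (U p - U q) / real k) \<longlonglongrightarrow> 0"
      by (rule lim_const_over_n)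
    show "\<exists>K. \<forall>k\<ge>K. \<bar>E p q\<bar> \<le> (q - p) * (U p - U q) / real k"
      using bound by (intro exI[of _ 1]) auto
  qed
  then show ?thesis
    using int by (simp add: E_def has_integral_integral)
qed

lemma negligible_countable:
  fixes S :: "'a::euclidean_space set"
  assumes "countable S"
  shows "negligible S"
proof -
  have "negligible (\<Union>x\<in>S. {x})"
    using assms by (intro negligible_countable_Union) auto
  then show ?thesis
    by simp
qed

lemma abs_diff_supergradients_has_integral:
  fixes gU gV U V :: "real \<Rightarrow> real"
  assumes "p \<le> q"
    and supU: "\<And>r s. r \<in> {p..q} \<Longrightarrow> s \<in> {p..q} \<Longrightarrow> gU s \<le> gU r + (s - r) * U r"
    and supV: "\<And>r s. r \<in> {p..q} \<Longrightarrow> s \<in> {p..q} \<Longrightarrow> gV s \<le> gV r + (s - r) * V r"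
    and cross: "\<And>r s. r \<in> {p..q} \<Longrightarrow> s \<in> {p..q} \<Longrightarrow> s < r \<Longrightarrow> V r \<le> U s"
  shows "((\<lambda>x. \<bar>U x - V x\<bar>) has_integral (gU q - gV q) - (gU p - gV p)) {p..q}"
proof -
  define D where "D = {x \<in> {p..q}. \<not> continuous (at x within {p..q}) U}"
  have "mono_on {p..q} (\<lambda>x. - U x)"
    using supergradient_antimono[of "{p..q}" gU U, OF supU] by (auto simp: mono_on_def)
  then have "countable {x \<in> {p..q}. \<not> continuous (at x within {p..q}) (\<lambda>x. - U x)}"
    by (rule mono_on_ctble_discont)
  moreover have "D \<subseteq> {x \<in> {p..q}. \<not> continuous (at x within {p..q}) (\<lambda>x. - U x)}"
    using continuous_minus[where f = "\<lambda>x. - U x"] by (auto simp: D_def)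
  ultimately have "countable D"
    by (rule countable_subset[rotated])
  then have negl: "negligible (insert p D)"
    by (simp add: negligible_countable)
  \<comment> \<open>Away from p and from the jumps of U, the crossing condition passes to the limit s \<rightarrow> x from the left.\<close>
  have UV: "V x \<le> U x" if x: "x \<in> {p..q} - insert p D" for x
  proof (rule tendsto_lowerbound)
    have "(U \<longlongrightarrow> U x) (at x within {p..q})"
      using x by (simp add: D_def continuous_within)
    then have "(U \<longlongrightarrow> U x) (at x within {p..x})"
      by (rule tendsto_within_subset) (use x in auto)
    then show "(U \<longlongrightarrow> U x) (at_left x)"
      using x by (simp add: at_within_Icc_at_left)
    show "\<forall>\<^sub>F s in at_left x. V x \<le> U s"
    proof -
      have "p < x"
        using x by auto
      from eventually_at_left_real[OF this] show ?thesis by eventually_elim (use x in \<open>auto intro: cross\<close>)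
    qed
  qed simp
  have "((\<lambda>x. U x - V x) has_integral (gU q - gV q) - (gU p - gV p)) {p..q}"
    using has_integral_diff[OF supergradient_has_integral[OF \<open>p \<le> q\<close> supU]
        supergradient_has_integral[OF \<open>p \<le> q\<close> supV]]
    by (simp add: algebra_simps)
  then show ?thesis
    by (rule has_integral_spike[OF negl, rotated]) (simp add: UV)
qed

lemma antimono_threshold:
  fixes f :: "real \<Rightarrow> real"
  assumes "a \<le> b" and anti: "\<And>r s. r \<in> {a..b} \<Longrightarrow> s \<in> {a..b} \<Longrightarrow> r \<le> s \<Longrightarrow> f s \<le> f r"
    and "m \<le> f a"
  obtains \<rho> where "a \<le> \<rho>" "\<rho> \<le> b"
    and "\<And>r. r \<in> {a..b} \<Longrightarrow> r < \<rho> \<Longrightarrow> m \<le> f r"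
    and "\<And>r. r \<in> {a..b} \<Longrightarrow> \<rho> < r \<Longrightarrow> f r \<le> m"
proof -
  define S where "S = {r \<in> {a..b}. m \<le> f r}"
  have "a \<in> S" "bdd_above S"
    using assms by (auto simp: S_def intro!: bdd_aboveI[of _ b])
  show thesis
  proof
    show "a \<le> Sup S"
      by (rule cSup_upper[OF \<open>a \<in> S\<close> \<open>bdd_above S\<close>])
    show "Sup S \<le> b"
      by (rule cSup_least) (use \<open>a \<in> S\<close> in blast, simp add: S_def)
  next
    fix r assume r: "r \<in> {a..b}" "r < Sup S"
    then obtain r' where "r' \<in> S" "r < r'"
      using less_cSup_iff[of S r] \<open>a \<in> S\<close> \<open>bdd_above S\<close> by auto
    then show "m \<le> f r"
      using anti[of r r'] r by (auto simp: S_def)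
  next
    fix r assume r: "r \<in> {a..b}" "Sup S < r"
    then show "f r \<le> m"
      using cSup_upper[OF _ \<open>bdd_above S\<close>, of r] by (force simp: S_def)
  qed
qed

lemma convex_on_le_towards_minimum:
  fixes f :: "real \<Rightarrow> real"
  assumes "convex_on S f" and "m \<in> S" and min: "\<And>y. y \<in> S \<Longrightarrow> f m \<le> f y"
    and "b \<in> S" and between: "b \<le> a \<and> a \<le> m \<or> m \<le> a \<and> a \<le> b"
  shows "f a \<le> f b"
proof (cases "b = m")
  case True
  then show ?thesis
    using between by auto
next
  case False
  define l where "l = (a - b) / (m - b)"
  have l: "0 \<le> l" "l \<le> 1"
    using between False by (auto simp: l_def divide_simps)
  have "l * (m - b) = a - b"
    using False by (simp add: l_def)
  then have "a = (1 - l) * b + l * m"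
    by (simp add: algebra_simps)
  then have "f a \<le> (1 - l) * f b + l * f m"
    using convex_onD[OF \<open>convex_on S f\<close> l \<open>b \<in> S\<close> \<open>m \<in> S\<close>] by simp
  also have "\<dots> \<le> (1 - l) * f b + l * f b"
    using min[OF \<open>b \<in> S\<close>] l by (intro add_left_mono mult_left_mono) auto
  finally show ?thesis
    by (simp add: algebra_simps)
qed

lemma lipschitz_on_if_bounded_subgradients:
  fixes f :: "real \<Rightarrow> real"
  assumes "S \<noteq> {}"
    and sub: "\<And>x. x \<in> S \<Longrightarrow> \<exists>g. \<bar>g\<bar> \<le> G \<and> (\<forall>y\<in>S. f x + g * (y - x) \<le> f y)"
  shows "G-lipschitz_on S f"
proof -
  have le: "f x - f y \<le> G * \<bar>x - y\<bar>" if "x \<in> S" "y \<in> S" for x y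
  proof -
    obtain g where g: "\<bar>g\<bar> \<le> G" "f x + g * (y - x) \<le> f y"
      using sub \<open>x \<in> S\<close> \<open>y \<in> S\<close> by blast
    have "- (g * (y - x)) \<le> \<bar>g\<bar> * \<bar>x - y\<bar>"
      by (metis abs_ge_minus_self abs_minus_commute abs_mult)
    also have "\<dots> \<le> G * \<bar>x - y\<bar>"
      using g(1) by (intro mult_right_mono) auto
    finally show ?thesis
      using g(2) by linarith
  qed
  have "0 \<le> G"
    using sub \<open>S \<noteq> {}\<close> by force
  with le show ?thesis
    unfolding lipschitz_on_def dist_real_def
    by (smt (verit, best) abs_minus_commute)
qed

lemma is_norm_real_eq_mult_abs:
  assumes "is_norm_real nrm"
  shows "nrm = (\<lambda>x. nrm 1 * \<bar>x\<bar>)"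
proof
  fix x
  show "nrm x = nrm 1 * \<bar>x\<bar>"
    using assms unfolding is_norm_real_def by (metis mult.commute mult.right_neutral)
qed

lemma is_norm_real_one_pos:
  assumes "is_norm_real nrm"
  shows "0 < nrm 1"
  using assms unfolding is_norm_real_def by (metis less_eq_real_def one_neq_zero)

section \<open>The work function\<close>

locale rbg =
  fixes xL xH L :: real and T :: nat and N :: "real \<Rightarrow> real" and c X :: "nat \<Rightarrow> real \<Rightarrow> real"
  assumes xL_nonneg: "0 \<le> xL" and xL_le_xH: "xL \<le> xH" and L_pos: "0 < L"
    and N_eq: "\<And>x. N x = L * \<bar>x\<bar>"
    and costs: "soco_costs xL xH T c"
    and run: "RBG_run xL xH N T c X"
begin

abbreviation F :: "real set" where "F \<equiv> {xL..xH}"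

abbreviation w :: "nat \<Rightarrow> real \<Rightarrow> real" where "w \<equiv> work xL xH N c"

lemma F_nonempty: "F \<noteq> {}"
  using xL_le_xH by simp

lemma N_le_shift: "N a \<le> N b + L * \<bar>a - b\<bar>"
proof -
  have "L * \<bar>a\<bar> \<le> L * (\<bar>b\<bar> + \<bar>a - b\<bar>)"
    using L_pos by (intro mult_left_mono) auto
  then show ?thesis
    by (simp add: N_eq distrib_left)
qed

lemma N_nonneg: "0 \<le> N x"
  using L_pos by (simp add: N_eq)

lemma cost_nonneg: "t \<in> {1..T} \<Longrightarrow> y \<in> F \<Longrightarrow> 0 \<le> c t y"
  using costs by (simp add: soco_costs_def)

lemma cost_convex: "t \<in> {1..T} \<Longrightarrow> convex_on F (c t)"
  using costs by (simp add: soco_costs_def)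

lemma cost_continuous: "t \<in> {1..T} \<Longrightarrow> continuous_on F (c t)"
proof -
  assume t: "t \<in> {1..T}"
  obtain G where "\<forall>x\<in>F. \<exists>g. \<bar>g\<bar> \<le> G \<and> (\<forall>y\<in>F. c t x + g * (y - x) \<le> c t y)"
    using costs t unfolding soco_costs_def by blast
  then have "G-lipschitz_on F (c t)"
    using F_nonempty by (intro lipschitz_on_if_bounded_subgradients) auto
  then show ?thesis
    by (rule lipschitz_on_continuous_on)
qed

lemma cost_attains_min:
  assumes "t \<in> {1..T}"
  obtains m where "m \<in> F" "\<And>y. y \<in> F \<Longrightarrow> c t m \<le> c t y"
  using continuous_attains_inf[OF compact_Icc F_nonempty cost_continuous[OF assms]] by blast

lemma work_nonneg: "t \<le> T \<Longrightarrow> 0 \<le> w t x"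
proof (induction t arbitrary: x)
  case 0
  then show ?case
    using L_pos by (simp add: N_eq)
next
  case (Suc t)
  show ?case
    using F_nonempty Suc cost_nonneg[of "Suc t"]
    by (simp, intro cInf_greatest) (auto intro!: add_nonneg_nonneg N_nonneg)
qed

lemma work_Suc_le:
  assumes "Suc t \<le> T" and "y \<in> F"
  shows "w (Suc t) x \<le> w t y + c (Suc t) y + N (x - y)"
proof -
  have "bdd_below ((\<lambda>y. w t y + c (Suc t) y + N (x - y)) ` F)"
    using work_nonneg cost_nonneg[of "Suc t"] assms(1)
    by (intro bdd_belowI[of _ 0]) (auto intro!: add_nonneg_nonneg N_nonneg)
  then show ?thesis
    using assms(2) by (simp add: cInf_lower)
qed

lemma work_le_shift: "t \<le> T \<Longrightarrow> w t x \<le> w t x' + L * \<bar>x - x'\<bar>"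
proof (cases t)
  case 0
  then show ?thesis
    using N_le_shift by simp
next
  case (Suc t0)
  assume "t \<le> T"
  have "w (Suc t0) x - L * \<bar>x - x'\<bar> \<le> w t0 y + c (Suc t0) y + N (x' - y)" if "y \<in> F" for y
    using work_Suc_le[of t0 y x] N_le_shift[of "x - y" "x' - y"] Suc \<open>t \<le> T\<close> that by simp
  then have "w (Suc t0) x - L * \<bar>x - x'\<bar> \<le> w (Suc t0) x'"
    using F_nonempty by (simp, intro cInf_greatest) auto
  then show ?thesis
    using Suc by simp
qed

lemma work_continuous: "t \<le> T \<Longrightarrow> continuous_on S (w t)"
proof -
  assume "t \<le> T"
  then have "L-lipschitz_on S (w t)"
    using work_le_shift[of t] L_pos unfolding lipschitz_on_def dist_real_def
    by (smt (verit, best) abs_minus_commute)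
  then show ?thesis
    by (rule lipschitz_on_continuous_on)
qed

lemma work_mono: "Suc t \<le> T \<Longrightarrow> w t x \<le> w (Suc t) x"
proof -
  assume "Suc t \<le> T"
  then have "w t x \<le> w t y + c (Suc t) y + N (x - y)" if "y \<in> F" for y
    using work_le_shift[of t x y] cost_nonneg[of "Suc t" y] that by (simp add: N_eq)
  then show ?thesis
    using F_nonempty by (simp, intro cInf_greatest) auto
qed

lemma work_Suc_attained:
  assumes "Suc t \<le> T"
  obtains y where "y \<in> F" "w (Suc t) x = w t y + c (Suc t) y + N (x - y)"
proof -
  have "continuous_on F (\<lambda>y. N (x - y))"
    unfolding N_eq by (intro continuous_intros)
  then have "continuous_on F (\<lambda>y. w t y + c (Suc t) y + N (x - y))"
    using assms by (intro continuous_intros work_continuous cost_continuous) auto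
  then obtain y where y: "y \<in> F" "\<And>z. z \<in> F \<Longrightarrow> w t y + c (Suc t) y + N (x - y) \<le> w t z + c (Suc t) z + N (x - z)"
    using continuous_attains_inf[OF compact_Icc F_nonempty] by blast
  then have "w (Suc t) x = w t y + c (Suc t) y + N (x - y)"
    by (simp, intro cInf_eq_minimum) auto
  with y(1) show thesis
    by (rule that)
qed

lemma work_le_path_cost:
  assumes "xs 0 = 0" and "\<forall>t\<in>{1..T}. xs t \<in> F" and "t \<le> T"
  shows "w t x \<le> (\<Sum>i=1..t. c i (xs i) + N (xs i - xs (i - 1))) + N (x - xs t)"
  using assms(3)
proof (induction t arbitrary: x)
  case 0
  then show ?case
    using assms(1) by simp
next
  case (Suc t)
  have "w (Suc t) x \<le> w t (xs (Suc t)) + c (Suc t) (xs (Suc t)) + N (x - xs (Suc t))"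
    using Suc.prems assms(2) by (intro work_Suc_le) auto
  then show ?case
    using Suc.IH[of "xs (Suc t)"] Suc.prems by simp
qed

lemma run_in: "t \<in> {1..T+1} \<Longrightarrow> r \<in> {-1<..<1} \<Longrightarrow> X t r \<in> F"
  using run unfolding RBG_run_def by blast

lemma run_min:
  assumes "t \<in> {1..T+1}" and "r \<in> {-1<..<1}" and "x \<in> F"
  shows "w (t - 1) (X t r) + r * L * X t r \<le> w (t - 1) x + r * L * x"
proof -
  have "w (t - 1) (X t r) + r * N (X t r) \<le> w (t - 1) x + r * N x"
    using run assms unfolding RBG_run_def by blast
  moreover have "0 \<le> X t r" "0 \<le> x"
    using run_in[OF assms(1,2)] assms(3) xL_nonneg by auto
  ultimately show ?thesis
    by (simp add: N_eq)
qed

text \<open>As \<open>\<bar>s\<bar> < 1\<close>, a move costs more (\<open>N\<close>) than it gains (\<open>s N\<close>), so the infimum defining \<open>w t\<close>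
  at the point chosen at time \<open>t + 1\<close> is attained without moving.\<close>
lemma work_at_next_choice:
  assumes t: "t \<in> {1..T}" and s: "s \<in> {-1<..<1}"
  shows "w t (X (t+1) s) = w (t - 1) (X (t+1) s) + c t (X (t+1) s)"
proof -
  define z where "z = X (t+1) s"
  obtain t0 where t0: "t = Suc t0"
    using t by (cases t) auto
  obtain y where y: "y \<in> F" "w t z = w t0 y + c t y + N (z - y)"
    using work_Suc_attained[of t0 z] t t0 by auto
  have "w t z + s * L * z \<le> w t y + s * L * y"
    using run_min[of "t+1" s y] t s y(1) by (simp add: z_def)
  also have "w t y \<le> w t0 y + c t y"
    using work_Suc_le[of t0 y y] t t0 y(1) by (simp add: N_eq)
  finally have "L * \<bar>z - y\<bar> + s * L * (z - y) \<le> 0"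
    using y(2) by (simp add: N_eq algebra_simps)
  moreover have "\<bar>s * L * (z - y)\<bar> < L * \<bar>z - y\<bar>" if "z \<noteq> y"
    using s L_pos that by (simp add: abs_mult abs_less_iff)
  ultimately have "z = y"
    by fastforce
  then show ?thesis
    using y(2) t0 by (simp add: N_eq z_def)
qed

section \<open>Switching cost of RBG\<close>

text \<open>Extension of the choice \<open>X t r\<close> to \<open>r = \<plusminus>1\<close>; as \<open>w\<close> is \<open>L\<close>-Lipschitz, \<open>xH\<close> and \<open>xL\<close>
  minimise \<open>Y\<^sup>t\<close> there.\<close>
definition X_ext :: "nat \<Rightarrow> real \<Rightarrow> real" where
  "X_ext t r = (if r \<le> -1 then xH else if 1 \<le> r then xL else X t r)"

definition Y_min :: "nat \<Rightarrow> real \<Rightarrow> real" where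
  "Y_min t r = w (t - 1) (X_ext t r) + r * L * X_ext t r"

lemma X_ext_in: "t \<in> {1..T+1} \<Longrightarrow> r \<in> {-1..1} \<Longrightarrow> X_ext t r \<in> F"
  using run_in[of t r] xL_le_xH by (auto simp: X_ext_def)

lemma X_ext_min:
  assumes t: "t \<in> {1..T+1}" and r: "r \<in> {-1..1}" and x: "x \<in> F"
  shows "w (t - 1) (X_ext t r) + r * L * X_ext t r \<le> w (t - 1) x + r * L * x"
proof -
  have tT: "t - 1 \<le> T"
    using t by auto
  consider "r = -1" | "r = 1" | "r \<in> {-1<..<1}"
    using r by fastforce
  then show ?thesis
  proof cases
    case 1
    then show ?thesis
      using work_le_shift[OF tT, of xH x] x by (simp add: X_ext_def algebra_simps)
  next
    case 2
    then show ?thesis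
      using work_le_shift[OF tT, of xL x] x by (simp add: X_ext_def algebra_simps)
  next
    case 3
    then show ?thesis
      using run_min[OF t 3 x] by (simp add: X_ext_def)
  qed
qed

lemma Y_min_supergradient:
  "t \<in> {1..T+1} \<Longrightarrow> r \<in> {-1..1} \<Longrightarrow> s \<in> {-1..1} \<Longrightarrow>
    Y_min t s \<le> Y_min t r + (s - r) * (L * X_ext t r)"
  using X_ext_min[of t s "X_ext t r"] X_ext_in[of t r] by (simp add: Y_min_def algebra_simps)

lemma X_ext_antimono:
  "t \<in> {1..T+1} \<Longrightarrow> r \<in> {-1..1} \<Longrightarrow> s \<in> {-1..1} \<Longrightarrow> r \<le> s \<Longrightarrow> X_ext t s \<le> X_ext t r"
  using supergradient_antimono[of "{-1..1}" "Y_min t" "\<lambda>r. L * X_ext t r" r s]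
    Y_min_supergradient[of t] L_pos by auto

lemma Y_min_mono:
  assumes t: "t \<in> {1..T}" and r: "r \<in> {-1..1}"
  shows "Y_min t r \<le> Y_min (t+1) r"
proof -
  have "Y_min t r \<le> w (t - 1) (X_ext (t+1) r) + r * L * X_ext (t+1) r"
    using X_ext_min[of t r "X_ext (t+1) r"] X_ext_in[of "t+1" r] t r by (simp add: Y_min_def)
  also have "\<dots> \<le> w t (X_ext (t+1) r) + r * L * X_ext (t+1) r"
    using work_mono[of "t - 1" "X_ext (t+1) r"] t by (simp del: work.simps)
  finally show ?thesis
    by (simp add: Y_min_def)
qed

lemma cost_change_le:
  assumes t: "t \<in> {1..T}" and r: "r \<in> {-1<..<1}" and s: "s \<in> {-1<..<1}"
  shows "c t (X (t+1) s) - c t (X t r) \<le> (r - s) * L * (X (t+1) s - X t r)"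
proof -
  define a b where "a = X t r" and "b = X (t+1) s"
  have F: "a \<in> F" "b \<in> F"
    using run_in[of t r] run_in[of "t+1" s] t r s by (auto simp: a_def b_def)
  have "w (t - 1) a + r * L * a \<le> w (t - 1) b + r * L * b"
    using run_min[of t r b] t r F by (simp add: a_def)
  moreover have "w t b + s * L * b \<le> w t a + s * L * a"
    using run_min[of "t+1" s a] t s F by (simp add: b_def)
  moreover have "w t b = w (t - 1) b + c t b"
    using work_at_next_choice[OF t s] by (simp add: b_def)
  moreover have "w t a \<le> w (t - 1) a + c t a"
    using work_Suc_le[of "t - 1" a a] t F by (simp add: N_eq del: work.simps)
  ultimately show ?thesis
    unfolding a_def[symmetric] b_def[symmetric] by (simp add: algebra_simps)
qed

lemma choice_order_towards_min:
  assumes t: "t \<in> {1..T}" and r: "r \<in> {-1<..<1}" and s: "s \<in> {-1<..<1}"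
    and m: "m \<in> F" "\<And>y. y \<in> F \<Longrightarrow> c t m \<le> c t y"
    and between: "X (t+1) s \<le> X t r \<and> X t r \<le> m \<or> m \<le> X t r \<and> X t r \<le> X (t+1) s"
  shows "0 \<le> (r - s) * (X (t+1) s - X t r)"
proof -
  have "c t (X t r) \<le> c t (X (t+1) s)"
    using convex_on_le_towards_minimum[OF cost_convex[OF t] m] run_in[of "t+1" s] t s between
    by auto
  then have "0 \<le> L * ((r - s) * (X (t+1) s - X t r))"
    using cost_change_le[OF t r s] by (simp add: algebra_simps)
  then show ?thesis
    using L_pos by (simp add: zero_le_mult_iff)
qed

lemma X_ext_le_next_below_min:
  assumes t: "t \<in> {1..T}" and m: "m \<in> F" "\<And>y. y \<in> F \<Longrightarrow> c t m \<le> c t y"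
    and r: "r \<in> {-1..1}" and s: "s \<in> {-1..1}" and "s < r" and "X_ext t r \<le> m"
  shows "X_ext t r \<le> X_ext (t+1) s"
proof -
  consider "r = 1" | "s = -1" | "r \<in> {-1<..<1}" "s \<in> {-1<..<1}"
    using r s \<open>s < r\<close> by fastforce
  then show ?thesis
  proof cases
    case 1
    then show ?thesis
      using X_ext_in[of "t+1" s] t s by (simp add: X_ext_def)
  next
    case 2
    then show ?thesis
      using X_ext_in[of t r] t r by (simp add: X_ext_def)
  next
    case 3
    show ?thesis
    proof (rule ccontr)
      assume "\<not> ?thesis"
      then have "X (t+1) s < X t r"
        using 3 by (simp add: X_ext_def)
      moreover have "0 \<le> (r - s) * (X (t+1) s - X t r)"
        using choice_order_towards_min[OF t 3 m] \<open>X_ext t r \<le> m\<close> calculation 3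
        by (simp add: X_ext_def)
      ultimately show False
        using \<open>s < r\<close> by (simp add: zero_le_mult_iff)
    qed
  qed
qed

lemma X_ext_next_le_above_min:
  assumes t: "t \<in> {1..T}" and m: "m \<in> F" "\<And>y. y \<in> F \<Longrightarrow> c t m \<le> c t y"
    and r: "r \<in> {-1..1}" and s: "s \<in> {-1..1}" and "r < s" and "m \<le> X_ext t r"
  shows "X_ext (t+1) s \<le> X_ext t r"
proof -
  consider "s = 1" | "r = -1" | "r \<in> {-1<..<1}" "s \<in> {-1<..<1}"
    using r s \<open>r < s\<close> by fastforce
  then show ?thesis
  proof cases
    case 1
    then show ?thesis
      using X_ext_in[of t r] t r by (simp add: X_ext_def)
  next
    case 2
    then show ?thesis
      using X_ext_in[of "t+1" s] t s by (simp add: X_ext_def)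
  next
    case 3
    show ?thesis
    proof (rule ccontr)
      assume "\<not> ?thesis"
      then have "X t r < X (t+1) s"
        using 3 by (simp add: X_ext_def)
      moreover have "0 \<le> (r - s) * (X (t+1) s - X t r)"
        using choice_order_towards_min[OF t 3 m] \<open>m \<le> X_ext t r\<close> calculation 3
        by (simp add: X_ext_def)
      ultimately show False
        using \<open>r < s\<close> by (simp add: zero_le_mult_iff)
    qed
  qed
qed

lemma switching_has_integral_above_min:
  assumes t: "t \<in> {1..T}" and m: "m \<in> F" "\<And>y. y \<in> F \<Longrightarrow> c t m \<le> c t y"
    and ab: "-1 \<le> a" "a \<le> b" "b \<le> 1" and above: "\<And>r. r \<in> {a..b} \<Longrightarrow> r < b \<Longrightarrow> m \<le> X_ext t r"
  shows "((\<lambda>r. \<bar>L * X_ext (t+1) r - L * X_ext t r\<bar>) has_integral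
      (Y_min (t+1) a - Y_min t a) - (Y_min (t+1) b - Y_min t b)) {a..b}"
proof -
  have t1: "t \<in> {1..T+1}" "t + 1 \<in> {1..T+1}"
    using t by auto
  have "((\<lambda>r. \<bar>L * X_ext t r - L * X_ext (t+1) r\<bar>) has_integral
      (Y_min t b - Y_min (t+1) b) - (Y_min t a - Y_min (t+1) a)) {a..b}"
  proof (rule abs_diff_supergradients_has_integral[OF ab(2)])
    fix r s assume r: "r \<in> {a..b}" and s: "s \<in> {a..b}"
    then have r': "r \<in> {-1..1}" and s': "s \<in> {-1..1}"
      using ab by auto
    show "Y_min t s \<le> Y_min t r + (s - r) * (L * X_ext t r)"
      by (rule Y_min_supergradient[OF t1(1) r' s'])
    show "Y_min (t+1) s \<le> Y_min (t+1) r + (s - r) * (L * X_ext (t+1) r)"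
      by (rule Y_min_supergradient[OF t1(2) r' s'])
    assume "s < r"
    then have "X_ext (t+1) r \<le> X_ext t s"
      using X_ext_next_le_above_min[OF t m s' r'] above[OF s] r by auto
    then show "L * X_ext (t+1) r \<le> L * X_ext t s"
      using L_pos by simp
  qed
  then show ?thesis
    by (simp add: abs_minus_commute algebra_simps)
qed

lemma switching_has_integral_below_min:
  assumes t: "t \<in> {1..T}" and m: "m \<in> F" "\<And>y. y \<in> F \<Longrightarrow> c t m \<le> c t y"
    and ab: "-1 \<le> a" "a \<le> b" "b \<le> 1" and below: "\<And>r. r \<in> {a..b} \<Longrightarrow> a < r \<Longrightarrow> X_ext t r \<le> m"
  shows "((\<lambda>r. \<bar>L * X_ext (t+1) r - L * X_ext t r\<bar>) has_integral
      (Y_min (t+1) b - Y_min t b) - (Y_min (t+1) a - Y_min t a)) {a..b}"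
proof (rule abs_diff_supergradients_has_integral[OF ab(2)])
  have t1: "t \<in> {1..T+1}" "t + 1 \<in> {1..T+1}"
    using t by auto
  fix r s assume r: "r \<in> {a..b}" and s: "s \<in> {a..b}"
  then have r': "r \<in> {-1..1}" and s': "s \<in> {-1..1}"
    using ab by auto
  show "Y_min t s \<le> Y_min t r + (s - r) * (L * X_ext t r)"
    by (rule Y_min_supergradient[OF t1(1) r' s'])
  show "Y_min (t+1) s \<le> Y_min (t+1) r + (s - r) * (L * X_ext (t+1) r)"
    by (rule Y_min_supergradient[OF t1(2) r' s'])
  assume "s < r"
  then have "X_ext t r \<le> X_ext (t+1) s"
    using X_ext_le_next_below_min[OF t m r' s'] below[OF r] s by auto
  then show "L * X_ext t r \<le> L * X_ext (t+1) s"
    using L_pos by simp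
qed

lemma step_switching_has_integral:
  assumes t: "t \<in> {1..T}"
  obtains I where "((\<lambda>r. \<bar>L * X_ext (t+1) r - L * X_ext t r\<bar>) has_integral I) {-1..1}"
    and "I \<le> (Y_min (t+1) (-1) - Y_min t (-1)) + (Y_min (t+1) 1 - Y_min t 1)"
proof -
  obtain m where m: "m \<in> F" "\<And>y. y \<in> F \<Longrightarrow> c t m \<le> c t y"
    using cost_attains_min[OF t] by blast
  have "m \<le> X_ext t (-1)"
    using m by (simp add: X_ext_def)
  then obtain \<rho> where \<rho>: "-1 \<le> \<rho>" "\<rho> \<le> 1"
    and above: "\<And>r. r \<in> {-1..1} \<Longrightarrow> r < \<rho> \<Longrightarrow> m \<le> X_ext t r"
    and below: "\<And>r. r \<in> {-1..1} \<Longrightarrow> \<rho> < r \<Longrightarrow> X_ext t r \<le> m"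
    using antimono_threshold[of "-1" 1 "X_ext t" m] X_ext_antimono[of t] t by auto
  have "((\<lambda>r. \<bar>L * X_ext (t+1) r - L * X_ext t r\<bar>) has_integral
      (Y_min (t+1) (-1) - Y_min t (-1)) - (Y_min (t+1) \<rho> - Y_min t \<rho>)) {-1..\<rho>}"
    by (rule switching_has_integral_above_min[OF t m]) (use \<rho> above in auto)
  moreover have "((\<lambda>r. \<bar>L * X_ext (t+1) r - L * X_ext t r\<bar>) has_integral
      (Y_min (t+1) 1 - Y_min t 1) - (Y_min (t+1) \<rho> - Y_min t \<rho>)) {\<rho>..1}"
    by (rule switching_has_integral_below_min[OF t m]) (use \<rho> below in auto)
  ultimately have "((\<lambda>r. \<bar>L * X_ext (t+1) r - L * X_ext t r\<bar>) has_integral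
      ((Y_min (t+1) (-1) - Y_min t (-1)) - (Y_min (t+1) \<rho> - Y_min t \<rho>))
      + ((Y_min (t+1) 1 - Y_min t 1) - (Y_min (t+1) \<rho> - Y_min t \<rho>))) {-1..1}"
    by (rule has_integral_combine[OF \<rho>])
  moreover have "Y_min t \<rho> \<le> Y_min (t+1) \<rho>"
    using Y_min_mono[OF t, of \<rho>] \<rho> by simp
  ultimately show thesis
    using that by simp
qed

lemma le_OPT:
  assumes "\<And>xs. xs 0 = 0 \<Longrightarrow> \<forall>t\<in>{1..T}. xs t \<in> F \<Longrightarrow>
      a \<le> (\<Sum>t=1..T. c t (xs t) + N (xs t - xs (t - 1)))"
  shows "a \<le> OPT xL xH N T c"
  unfolding OPT_def
proof (rule cInf_greatest)
  define xs :: "nat \<Rightarrow> real" where "xs t = (if t = 0 then 0 else xL)" for t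
  have "xs 0 = 0 \<and> (\<forall>t\<in>{1..T}. xs t \<in> F)"
    using xL_le_xH by (simp add: xs_def)
  then show "{\<Sum>t = 1..T. c t (xs t) + N (xs t - xs (t - 1)) |xs. xs 0 = 0 \<and> (\<forall>t\<in>{1..T}. xs t \<in> F)} \<noteq> {}"
    by blast
qed (use assms in blast)

lemma Y_min_boundary_le_OPT:
  "(Y_min (T+1) (-1) - Y_min 1 (-1)) + (Y_min (T+1) 1 - Y_min 1 1) \<le> 2 * OPT xL xH N T c"
proof -
  have "((Y_min (T+1) (-1) - Y_min 1 (-1)) + (Y_min (T+1) 1 - Y_min 1 1)) / 2
      \<le> (\<Sum>t=1..T. c t (xs t) + N (xs t - xs (t - 1)))" (is "_ \<le> ?cost")
    if xs: "xs 0 = 0" "\<forall>t\<in>{1..T}. xs t \<in> F" for xs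
  proof -
    have "0 \<le> xs T \<and> xs T \<le> xH"
    proof (cases "T = 0")
      case False
      then have "xs T \<in> F"
        using xs(2) by simp
      then show ?thesis
        using xL_nonneg by simp
    qed (use xs(1) xL_nonneg xL_le_xH in simp)
    then have "\<bar>xH - xs T\<bar> + \<bar>xL - xs T\<bar> \<le> xH + xL"
      using xL_nonneg by auto
    then have "L * \<bar>xH - xs T\<bar> + L * \<bar>xL - xs T\<bar> \<le> L * xH + L * xL"
      using L_pos by (simp add: distrib_left[symmetric])
    moreover have "w T xH \<le> ?cost + L * \<bar>xH - xs T\<bar>" "w T xL \<le> ?cost + L * \<bar>xL - xs T\<bar>"
      using work_le_path_cost[OF xs] by (simp_all add: N_eq)
    ultimately have "w T xH + w T xL \<le> 2 * ?cost + L * xH + L * xL"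
      by linarith
    moreover have "Y_min 1 (-1) = 0" "Y_min 1 1 = 2 * (L * xL)"
      using xL_nonneg xL_le_xH by (simp_all add: Y_min_def X_ext_def N_eq)
    moreover have "Y_min (T+1) (-1) = w T xH - L * xH" "Y_min (T+1) 1 = w T xL + L * xL"
      by (simp_all add: Y_min_def X_ext_def)
    ultimately show ?thesis
      by simp
  qed
  then have "((Y_min (T+1) (-1) - Y_min 1 (-1)) + (Y_min (T+1) 1 - Y_min 1 1)) / 2 \<le> OPT xL xH N T c"
    by (rule le_OPT)
  then show ?thesis
    by simp
qed

lemma switching_has_integral:
  obtains I where "((\<lambda>r. L * (\<Sum>t=1..T. \<bar>X (t+1) r - X t r\<bar>)) has_integral I) {-1<..<1}"
    and "I \<le> 2 * OPT xL xH N T c"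
proof -
  define D where "D t = (Y_min (t+1) (-1) - Y_min t (-1)) + (Y_min (t+1) 1 - Y_min t 1)" for t
  have "\<exists>I. ((\<lambda>r. \<bar>L * X_ext (t+1) r - L * X_ext t r\<bar>) has_integral I) {-1..1} \<and> I \<le> D t"
    if "t \<in> {1..T}" for t
    using step_switching_has_integral[OF that] unfolding D_def by blast
  then obtain I where I: "\<And>t. t \<in> {1..T} \<Longrightarrow>
      ((\<lambda>r. \<bar>L * X_ext (t+1) r - L * X_ext t r\<bar>) has_integral I t) {-1..1}"
    "\<And>t. t \<in> {1..T} \<Longrightarrow> I t \<le> D t"
    by metis
  have "((\<lambda>r. \<Sum>t=1..T. \<bar>L * X_ext (t+1) r - L * X_ext t r\<bar>) has_integral sum I {1..T}) {-1<..<1}"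
    using has_integral_sum[of "{1..T}", OF _ I(1)] by (simp add: has_integral_Icc_iff_Ioo)
  moreover have "(\<Sum>t=1..T. \<bar>L * X_ext (t+1) r - L * X_ext t r\<bar>) = L * (\<Sum>t=1..T. \<bar>X (t+1) r - X t r\<bar>)"
    if "r \<in> {-1<..<1}" for r
  proof -
    have "\<bar>L * X_ext (t+1) r - L * X_ext t r\<bar> = L * \<bar>X (t+1) r - X t r\<bar>" for t
      using that L_pos by (simp add: X_ext_def abs_mult flip: right_diff_distrib)
    then show ?thesis
      by (simp add: sum_distrib_left)
  qed
  then have "((\<lambda>r. \<Sum>t=1..T. \<bar>L * X_ext (t+1) r - L * X_ext t r\<bar>) has_integral sum I {1..T}) {-1<..<1}
      \<longleftrightarrow> ((\<lambda>r. L * (\<Sum>t=1..T. \<bar>X (t+1) r - X t r\<bar>)) has_integral sum I {1..T}) {-1<..<1}"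
    by (rule has_integral_cong)
  ultimately have "((\<lambda>r. L * (\<Sum>t=1..T. \<bar>X (t+1) r - X t r\<bar>)) has_integral sum I {1..T}) {-1<..<1}"
    by blast
  moreover have "sum I {1..T} \<le> 2 * OPT xL xH N T c"
  proof -
    have "sum I {1..T} \<le> sum D {1..T}"
      using I(2) by (rule sum_mono)
    also have "\<dots> = (Y_min (T+1) (-1) - Y_min 1 (-1)) + (Y_min (T+1) 1 - Y_min 1 1)"
      using sum_Suc_diff[of 1 T "\<lambda>t. Y_min t (-1)"] sum_Suc_diff[of 1 T "\<lambda>t. Y_min t 1"]
      by (simp add: D_def sum.distrib)
    finally show ?thesis
      using Y_min_boundary_le_OPT by simp
  qed
  ultimately show thesis
    by (rule that)
qed

end

theorem lemma5:
  fixes xL xH \<theta> :: real and T :: nat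
    and nrm N :: "real \<Rightarrow> real"
    and c X :: "nat \<Rightarrow> real \<Rightarrow> real"
  assumes "0 \<le> xL" and "xL \<le> xH"
    and "is_norm_real nrm"
    and "\<theta> \<ge> 1"
    and "is_norm_real N" and "N 1 = \<theta> * nrm 1"
    and "soco_costs xL xH T c"
    and "RBG_run xL xH N T c X"
  shows "(SC nrm T X) integrable_on {-1<..<1} \<and>
         integral {-1<..<1} (SC nrm T X) / 2 \<le> OPT xL xH N T c / \<theta>"
proof -
  define L where "L = \<theta> * nrm 1"
  have "0 < L"
    using is_norm_real_one_pos[OF assms(3)] assms(4) by (simp add: L_def)
  moreover have "N = (\<lambda>x. L * \<bar>x\<bar>)"
    using is_norm_real_eq_mult_abs[OF assms(5)] assms(6) by (simp add: L_def)
  ultimately interpret rbg xL xH L T N c X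
    using assms by unfold_locales auto
  obtain I where I: "((\<lambda>r. L * (\<Sum>t=1..T. \<bar>X (t+1) r - X t r\<bar>)) has_integral I) {-1<..<1}"
    and "I \<le> 2 * OPT xL xH N T c"
    by (rule switching_has_integral)
  have "SC nrm T X = (\<lambda>r. (1 / \<theta>) * (L * (\<Sum>t=1..T. \<bar>X (t+1) r - X t r\<bar>)))"
    using assms(4) unfolding SC_def[abs_def] L_def
    by (subst is_norm_real_eq_mult_abs[OF assms(3)]) (simp add: sum_distrib_left)
  then have "(SC nrm T X has_integral I / \<theta>) {-1<..<1}"
    using has_integral_mult_right[OF I, of "1 / \<theta>"] by simp
  moreover have "I / 2 / \<theta> \<le> OPT xL xH N T c / \<theta>"
    using \<open>I \<le> 2 * OPT xL xH N T c\<close> assms(4) by (intro divide_right_mono) auto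
  ultimately show ?thesis
    by (auto simp: integral_unique)
qed

end
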